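(* Let $q$ be a prime power, $m\ge2$, $s,\ell,r_1,\dots,r_m\ge1$ integers, $k=m\ell-s$ with $k\ge\ell$, $n=\sum_{i=1}^m(\ell+r_i)$ and $R=\sum_{i=1}^m r_i$. Let $\bar{\mathbb{F}}_q$ be the algebraic closure of $\mathbb{F}_q$. For $(\alpha,\beta)\in\bar{\mathbb{F}}_q^{sk}\times\bar{\mathbb{F}}_q^{\ell R}$, with $\alpha=(\alpha_{w,z})_{1\le w\le k,1\le z\le s}$ and $\beta=(\beta_{t,i,j})_{1\le t\le\ell,1\le i\le m,1\le j\le r_i}$, let $G(\alpha,\beta)\in\bar{\mathbb{F}}_q^{k\times n}$ be the matrix $(C_1\mid D_1\mid C_2\mid D_2\mid\dots\mid C_m\mid D_m)$ where $(C_1\mid\dots\mid C_m)=[I_k\mid A]$ with $A=(\alpha_{w,z})\in\bar{\mathbb{F}}_q^{k\times s}$, each $C_i$ has $\ell$ columns, and $D_i\in\bar{\mathbb{F}}_q^{k\times r_i}$ has $j$-th column $\sum_{t=1}^{\ell}\beta_{t,i,j}C_i^{(t)}$, where $C_i^{(t)}$ is the $t$-th column of $C_i$. Then the set $$\mathcal A_{\mathrm{PMDS}}=\{(\alpha,\beta)\in\bar{\mathbb{F}}_q^{sk}\times\bar{\mathbb{F}}_q^{\ell R}\mid \text{the row space of }G(\alpha,\beta)\text{ is an }[n,k,\ell;r_1,\dots,r_m]\text{-PMDS code}\}$$ is a generic set, i.e. it contains a non-empty Zariski-open subset of $\bar{\mathbb{F}}_q^{sk+\ell R}$.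
   Context: The Zariski topology on $\bar{\mathbb{F}}^N$ has as closed sets the common zero sets in $\bar{\mathbb{F}}^N$ of sets of polynomials. An $[n,k]$-MDS code over a field $\mathbb{F}$ is a linear code in $\mathbb{F}^n$ of dimension $k$ and minimum Hamming distance $n-k+1$. PMDS codes: let $\ell,m,r_1,\dots,r_m$ be positive integers, $n=\sum_{i=1}^m(r_i+\ell)$, and $C\subseteq\mathbb{F}^n$ a linear code of dimension $k<n$ with generator matrix $G=(B_1\mid\dots\mid B_m)$, $B_i\in\mathbb{F}^{k\times(r_i+\ell)}$ (here $B_i=(C_i\mid D_i)$). Then $C$ is an $[n,k,\ell;r_1,\dots,r_m]$-PMDS code if (i) for each $i$ the row space of $B_i$ is an $[r_i+\ell,\ell]$-MDS code, and (ii) for any choice of $r_i$ erased coordinates in the $i$-th block for every $i$, the code obtained from $C$ by puncturing these coordinates is an $[m\ell,k]$-MDS code. *)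

theory Defs
  imports "HOL-Computational_Algebra.Polynomial" "HOL-Computational_Algebra.Primes"
begin

definition prime_power :: "nat \<Rightarrow> bool" where
  "prime_power q \<longleftrightarrow> (\<exists>p e. prime p \<and> e \<ge> 1 \<and> q = p ^ e)"

text \<open>The field 'a is an algebraic closure of F_q: it has the characteristic p of F_q,
  it is algebraically closed, and it is algebraic over its prime field F_p
  (equivalently over F_q, since F_q is algebraic over F_p).\<close>
definition is_alg_closure_of_Fq :: "nat \<Rightarrow> 'a::field itself \<Rightarrow> bool" where
  "is_alg_closure_of_Fq q TYPE('a) \<longleftrightarrow>
     (\<exists>p e. prime p \<and> e \<ge> 1 \<and> q = p ^ e \<and> CHAR('a) = p) \<and>
     (\<forall>f :: 'a poly. degree f \<ge> 1 \<longrightarrow> (\<exists>x. poly f x = 0)) \<and>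
     (\<forall>x :: 'a. \<exists>f :: 'a poly. f \<noteq> 0 \<and> (\<forall>i. coeff f i \<in> range of_nat) \<and> poly f x = 0)"

definition affine_space :: "nat \<Rightarrow> (nat \<Rightarrow> 'a::zero) set" where
  "affine_space N = {x. \<forall>i\<ge>N. x i = 0}"

inductive_set poly_funs :: "nat \<Rightarrow> ((nat \<Rightarrow> 'a::comm_ring_1) \<Rightarrow> 'a) set" for N where
  pf_const: "(\<lambda>x. c) \<in> poly_funs N"
| pf_var: "i < N \<Longrightarrow> (\<lambda>x. x i) \<in> poly_funs N"
| pf_add: "f \<in> poly_funs N \<Longrightarrow> g \<in> poly_funs N \<Longrightarrow> (\<lambda>x. f x + g x) \<in> poly_funs N"
| pf_mult: "f \<in> poly_funs N \<Longrightarrow> g \<in> poly_funs N \<Longrightarrow> (\<lambda>x. f x * g x) \<in> poly_funs N"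

definition zariski_closed :: "nat \<Rightarrow> (nat \<Rightarrow> 'a::comm_ring_1) set \<Rightarrow> bool" where
  "zariski_closed N Z \<longleftrightarrow> (\<exists>S \<subseteq> poly_funs N. Z = {x \<in> affine_space N. \<forall>f\<in>S. f x = 0})"

definition zariski_open :: "nat \<Rightarrow> (nat \<Rightarrow> 'a::comm_ring_1) set \<Rightarrow> bool" where
  "zariski_open N U \<longleftrightarrow> U \<subseteq> affine_space N \<and> zariski_closed N (affine_space N - U)"

definition generic_set :: "nat \<Rightarrow> (nat \<Rightarrow> 'a::comm_ring_1) set \<Rightarrow> bool" where
  "generic_set N A \<longleftrightarrow> (\<exists>U. zariski_open N U \<and> U \<noteq> {} \<and> U \<subseteq> A)"

definition lin_comb :: "nat \<Rightarrow> (nat \<Rightarrow> 'a::comm_ring_1) \<Rightarrow> (nat \<Rightarrow> nat \<Rightarrow> 'a) \<Rightarrow> nat \<Rightarrow> 'a" where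
  "lin_comb k c b = (\<lambda>j. \<Sum>i<k. c i * b i j)"

definition linear_code :: "nat \<Rightarrow> nat \<Rightarrow> (nat \<Rightarrow> 'a::field) set \<Rightarrow> bool" where
  "linear_code n k C \<longleftrightarrow> C \<subseteq> affine_space n \<and>
     (\<exists>b. C = {lin_comb k c b | c. True} \<and>
          (\<forall>c. lin_comb k c b = (\<lambda>j. 0) \<longrightarrow> (\<forall>i<k. c i = 0)))"

definition hamming_wt :: "nat \<Rightarrow> (nat \<Rightarrow> 'a::zero) \<Rightarrow> nat" where
  "hamming_wt n v = card {j. j < n \<and> v j \<noteq> 0}"

definition min_dist :: "nat \<Rightarrow> (nat \<Rightarrow> 'a::zero) set \<Rightarrow> nat" where
  "min_dist n C = Min {hamming_wt n v | v. v \<in> C \<and> v \<noteq> (\<lambda>j. 0)}"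

definition MDS_code :: "nat \<Rightarrow> nat \<Rightarrow> (nat \<Rightarrow> 'a::field) set \<Rightarrow> bool" where
  "MDS_code n k C \<longleftrightarrow> linear_code n k C \<and> min_dist n C = n - k + 1"

definition restrict_code :: "nat set \<Rightarrow> (nat \<Rightarrow> 'a::zero) set \<Rightarrow> (nat \<Rightarrow> 'a) set" where
  "restrict_code K C = (\<lambda>v. \<lambda>j. if j < card K then v (sorted_list_of_set K ! j) else 0) ` C"

definition block_start :: "nat \<Rightarrow> (nat \<Rightarrow> nat) \<Rightarrow> nat \<Rightarrow> nat" where
  "block_start l r i = (\<Sum>i'<i. l + r i')"

definition block :: "nat \<Rightarrow> (nat \<Rightarrow> nat) \<Rightarrow> nat \<Rightarrow> nat set" where
  "block l r i = {block_start l r i ..< block_start l r (Suc i)}"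

text \<open>[n,k,l;r_1,...,r_m]-PMDS code (0-based block indices).\<close>
definition PMDS_code :: "nat \<Rightarrow> nat \<Rightarrow> nat \<Rightarrow> nat \<Rightarrow> (nat \<Rightarrow> nat) \<Rightarrow> (nat \<Rightarrow> 'a::field) set \<Rightarrow> bool" where
  "PMDS_code n k l m r C \<longleftrightarrow>
     n = block_start l r m \<and> k < n \<and> linear_code n k C \<and>
     (\<forall>i<m. MDS_code (r i + l) l (restrict_code (block l r i) C)) \<and>
     (\<forall>E. (\<forall>i<m. E i \<subseteq> block l r i \<and> card (E i) = r i) \<longrightarrow>
          MDS_code (m * l) k (restrict_code ({0..<n} - (\<Union>i<m. E i)) C))"

text \<open>Coordinates of a point x of F^(sk + lR) (all indices 0-based):
  alpha w z = x (w*s + z) for w<k, z<s;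
  beta t i j = x (s*k + t*R + block_start 0 r i + j) for t<l, i<m, j<r i.\<close>
definition alpha_of :: "nat \<Rightarrow> (nat \<Rightarrow> 'a) \<Rightarrow> nat \<Rightarrow> nat \<Rightarrow> 'a" where
  "alpha_of s x w z = x (w * s + z)"

definition beta_of :: "nat \<Rightarrow> nat \<Rightarrow> nat \<Rightarrow> (nat \<Rightarrow> nat) \<Rightarrow> (nat \<Rightarrow> 'a) \<Rightarrow> nat \<Rightarrow> nat \<Rightarrow> nat \<Rightarrow> 'a" where
  "beta_of s k m r x t i j = x (s * k + t * (\<Sum>i'<m. r i') + (\<Sum>i'<i. r i') + j)"

definition IA_col :: "nat \<Rightarrow> (nat \<Rightarrow> nat \<Rightarrow> 'a::zero_neq_one) \<Rightarrow> nat \<Rightarrow> nat \<Rightarrow> 'a" where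
  "IA_col k A c w = (if c < k then (if w = c then 1 else 0) else A w (c - k))"

definition C_col :: "nat \<Rightarrow> nat \<Rightarrow> (nat \<Rightarrow> nat \<Rightarrow> 'a::zero_neq_one) \<Rightarrow> nat \<Rightarrow> nat \<Rightarrow> nat \<Rightarrow> 'a" where
  "C_col k l A i t w = IA_col k A (i * l + t) w"

definition D_col :: "nat \<Rightarrow> nat \<Rightarrow> (nat \<Rightarrow> nat \<Rightarrow> 'a::comm_ring_1) \<Rightarrow> (nat \<Rightarrow> nat \<Rightarrow> nat \<Rightarrow> 'a)
     \<Rightarrow> nat \<Rightarrow> nat \<Rightarrow> nat \<Rightarrow> 'a" where
  "D_col k l A B i j w = (\<Sum>t<l. B t i j * C_col k l A i t w)"

definition G_mat :: "nat \<Rightarrow> nat \<Rightarrow> nat \<Rightarrow> (nat \<Rightarrow> nat) \<Rightarrow> (nat \<Rightarrow> nat \<Rightarrow> 'a::comm_ring_1)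
     \<Rightarrow> (nat \<Rightarrow> nat \<Rightarrow> nat \<Rightarrow> 'a) \<Rightarrow> nat \<Rightarrow> nat \<Rightarrow> 'a" where
  "G_mat k l m r A B w c =
     (let i = (THE i. i < m \<and> c \<in> block l r i); c' = c - block_start l r i in
      if c' < l then C_col k l A i c' w else D_col k l A B i (c' - l) w)"

definition row_space :: "nat \<Rightarrow> nat \<Rightarrow> (nat \<Rightarrow> nat \<Rightarrow> 'a::comm_ring_1) \<Rightarrow> (nat \<Rightarrow> 'a) set" where
  "row_space k n G = {(\<lambda>c. if c < n then (\<Sum>w<k. u w * G w c) else 0) | u. True}"

end

(*
  Each PMDS requirement on G(alpha, beta) follows from the nonvanishing of finitely many minors,
  all polynomials in (alpha, beta): one l x l minor of C_i (so that block i spans the same code as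
  N_i = (I_l | beta_i)), all l x l minors of N_i, and the k x k minors of G on column sets meeting
  every block in at most l columns. None of these polynomials is zero, since a suitable 0-1 choice
  of alpha and beta turns the minor into the determinant of a permutation matrix. Over the infinite
  field their product is then a nonzero polynomial, and its non-vanishing locus is the required
  nonempty Zariski-open set.
*)
theory Submission
  imports Defs "Jordan_Normal_Form.Determinant"
begin

lemma poly_funs_sum:
  "finite S \<Longrightarrow> (\<And>a. a \<in> S \<Longrightarrow> f a \<in> poly_funs N) \<Longrightarrow> (\<lambda>x. \<Sum>a\<in>S. f a x) \<in> poly_funs N"
proof (induction S rule: finite_induct)
  case empty
  show ?case using poly_funs.pf_const[of 0] by simp
next
  case (insert a S)
  then show ?case using poly_funs.pf_add[of "f a" N "\<lambda>x. \<Sum>a\<in>S. f a x"] by simp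
qed

lemma poly_funs_prod:
  "finite S \<Longrightarrow> (\<And>a. a \<in> S \<Longrightarrow> f a \<in> poly_funs N) \<Longrightarrow> (\<lambda>x. \<Prod>a\<in>S. f a x) \<in> poly_funs N"
proof (induction S rule: finite_induct)
  case empty
  show ?case using poly_funs.pf_const[of 1] by simp
next
  case (insert a S)
  then show ?case using poly_funs.pf_mult[of "f a" N "\<lambda>x. \<Prod>a\<in>S. f a x"] by simp
qed

lemma poly_funs_det:
  assumes "\<And>i j. i < d \<Longrightarrow> j < d \<Longrightarrow> (\<lambda>x. F x i j) \<in> poly_funs N"
  shows "(\<lambda>x. det (mat d d (\<lambda>(i, j). F x i j))) \<in> poly_funs N"
proof -
  have "(\<lambda>x. signof p * (\<Prod>i = 0..<d. F x i (p i))) \<in> poly_funs N" if "p permutes {0..<d}" for p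
    using that assms
    by (intro poly_funs.pf_mult[OF poly_funs.pf_const] poly_funs_prod) (auto simp: permutes_in_image)
  then have "(\<lambda>x. \<Sum>p\<in>{p. p permutes {0..<d}}. signof p * (\<Prod>i = 0..<d. F x i (p i))) \<in> poly_funs N"
    by (intro poly_funs_sum) (auto simp: finite_permutations)
  moreover have "det (mat d d (\<lambda>(i, j). F x i j)) =
      (\<Sum>p\<in>{p. p permutes {0..<d}}. signof p * (\<Prod>i = 0..<d. F x i (p i)))" for x
    unfolding det_def by (auto intro!: sum.cong prod.cong simp: permutes_in_image)
  ultimately show ?thesis by simp
qed

lemma poly_funs_on_line:
  "f \<in> poly_funs N \<Longrightarrow> \<exists>p. \<forall>t. f (\<lambda>i. a i + t * (b i - a i)) = poly p t"
proof (induction rule: poly_funs.induct)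
  case (pf_const c)
  show ?case by (intro exI[of _ "[:c:]"]) simp
next
  case (pf_var i)
  show ?case by (intro exI[of _ "[:a i, b i - a i:]"]) (simp add: algebra_simps)
next
  case (pf_add f g)
  then obtain p q where "\<forall>t. f (\<lambda>i. a i + t * (b i - a i)) = poly p t"
    and "\<forall>t. g (\<lambda>i. a i + t * (b i - a i)) = poly q t" by blast
  then show ?case by (intro exI[of _ "p + q"]) simp
next
  case (pf_mult f g)
  then obtain p q where "\<forall>t. f (\<lambda>i. a i + t * (b i - a i)) = poly p t"
    and "\<forall>t. g (\<lambda>i. a i + t * (b i - a i)) = poly q t" by blast
  then show ?case by (intro exI[of _ "p * q"]) simp
qed

definition nonvanishing_poly_fun :: "nat \<Rightarrow> ((nat \<Rightarrow> 'a::comm_ring_1) \<Rightarrow> 'a) \<Rightarrow> bool" where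
  "nonvanishing_poly_fun N f \<longleftrightarrow> f \<in> poly_funs N \<and> (\<exists>x\<in>affine_space N. f x \<noteq> 0)"

text \<open>On the line through a non-root of f and a non-root of g, both restrict to nonzero univariate
  polynomials, whose product has a non-root since the field is infinite.\<close>
lemma nonvanishing_poly_fun_mult:
  fixes f g :: "(nat \<Rightarrow> 'a::field) \<Rightarrow> 'a"
  assumes inf: "infinite (UNIV :: 'a set)"
    and f: "nonvanishing_poly_fun N f" and g: "nonvanishing_poly_fun N g"
  shows "nonvanishing_poly_fun N (\<lambda>x. f x * g x)"
proof -
  obtain a b where a: "a \<in> affine_space N" "f a \<noteq> 0" and b: "b \<in> affine_space N" "g b \<noteq> 0"
    using f g unfolding nonvanishing_poly_fun_def by blast
  obtain p where p: "\<forall>t. f (\<lambda>i. a i + t * (b i - a i)) = poly p t"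
    using f poly_funs_on_line unfolding nonvanishing_poly_fun_def by blast
  obtain q where q: "\<forall>t. g (\<lambda>i. a i + t * (b i - a i)) = poly q t"
    using g poly_funs_on_line unfolding nonvanishing_poly_fun_def by blast
  have "poly p 0 \<noteq> 0" "poly q 1 \<noteq> 0"
    using p[rule_format, of 0] q[rule_format, of 1] a b by simp_all
  then have "p * q \<noteq> 0" by auto
  then have "finite {t. poly (p * q) t = 0}" by (rule poly_roots_finite)
  then obtain t where t: "poly (p * q) t \<noteq> 0"
    using inf by (metis (mono_tags, lifting) ex_new_if_finite mem_Collect_eq)
  moreover have "(\<lambda>i. a i + t * (b i - a i)) \<in> affine_space N"
    using a b by (simp add: affine_space_def)
  moreover have "f (\<lambda>i. a i + t * (b i - a i)) * g (\<lambda>i. a i + t * (b i - a i)) \<noteq> 0"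
    using t p q by simp
  ultimately show ?thesis
    using f g unfolding nonvanishing_poly_fun_def by (blast intro: poly_funs.pf_mult)
qed

lemma nonvanishing_poly_fun_prod:
  fixes f :: "'b \<Rightarrow> (nat \<Rightarrow> 'a::field) \<Rightarrow> 'a"
  assumes inf: "infinite (UNIV :: 'a set)"
  shows "finite S \<Longrightarrow> (\<And>a. a \<in> S \<Longrightarrow> nonvanishing_poly_fun N (f a)) \<Longrightarrow>
    nonvanishing_poly_fun N (\<lambda>x. \<Prod>a\<in>S. f a x)"
proof (induction S rule: finite_induct)
  case empty
  have "(\<lambda>i. 0) \<in> affine_space N" by (simp add: affine_space_def)
  then show ?case using poly_funs.pf_const[of 1] unfolding nonvanishing_poly_fun_def by auto
next
  case (insert a S)
  then show ?case
    using nonvanishing_poly_fun_mult[OF inf, of N "f a" "\<lambda>x. \<Prod>a\<in>S. f a x"] by simp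
qed

lemma generic_set_if_nonvanishing_poly_fun:
  assumes P: "nonvanishing_poly_fun N P"
    and A: "\<And>x. x \<in> affine_space N \<Longrightarrow> P x \<noteq> 0 \<Longrightarrow> x \<in> A"
  shows "generic_set N A"
proof -
  let ?U = "{x \<in> affine_space N. P x \<noteq> 0}"
  have "zariski_open N ?U"
    unfolding zariski_open_def zariski_closed_def
    using P unfolding nonvanishing_poly_fun_def by (intro conjI exI[of _ "{P}"]) auto
  moreover have "?U \<noteq> {}" using P unfolding nonvanishing_poly_fun_def by blast
  ultimately show ?thesis unfolding generic_set_def using A by blast
qed

lemma infinite_UNIV_if_alg_closed:
  assumes "\<forall>f :: 'a::field poly. degree f \<ge> 1 \<longrightarrow> (\<exists>x. poly f x = 0)"
  shows "infinite (UNIV :: 'a set)"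
proof
  assume fin: "finite (UNIV :: 'a set)"
  let ?Q = "\<Prod>a\<in>UNIV. [:-a, 1::'a:]"
  have "degree ?Q = card (UNIV :: 'a set)"
    by (subst degree_prod_eq_sum_degree) auto
  moreover have "card (UNIV :: 'a set) \<ge> 1" using fin by (simp add: Suc_leI card_gt_0_iff)
  ultimately have "degree (?Q + 1) \<ge> 1" by (subst degree_add_eq_left) auto
  then obtain x where "poly (?Q + 1) x = 0" using assms by blast
  moreover have "poly ?Q x = 0" by (simp add: poly_prod fin)
  ultimately show False by simp
qed

lemma det_zero_row:
  fixes A :: "'a::comm_ring_1 mat"
  assumes "A \<in> carrier_mat d d" and "i < d" and "\<And>j. j < d \<Longrightarrow> A $$ (i, j) = 0"
  shows "det A = 0"
proof -
  have "(\<Prod>i' = 0..<d. A $$ (i', p i')) = 0" if "p permutes {0..<d}" for p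
    using assms that by (intro prod_zero bexI[of _ i]) (auto simp: permutes_in_image)
  then show ?thesis using assms(1) unfolding det_def by simp
qed

lemma mat_mult_vec_nth:
  "j < d \<Longrightarrow> (mat d d (\<lambda>(j, w). f j w) *\<^sub>v vec d u) $ j = (\<Sum>w<d. f j w * u w)"
  by (simp add: scalar_prod_def atLeast0LessThan)

lemma mat_cong_square:
  "(\<And>i j. i < d \<Longrightarrow> j < d \<Longrightarrow> f i j = g i j) \<Longrightarrow> mat d d (\<lambda>(i, j). f i j) = mat d d (\<lambda>(i, j). g i j)"
  by (rule eq_matI) auto

lemma det_nonzero_imp_kernel_trivial:
  fixes f :: "nat \<Rightarrow> nat \<Rightarrow> 'a::field"
  assumes "det (mat d d (\<lambda>(j, w). f j w)) \<noteq> 0" and "\<And>j. j < d \<Longrightarrow> (\<Sum>w<d. f j w * u w) = 0"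
  shows "\<forall>w<d. u w = 0"
proof -
  let ?A = "mat d d (\<lambda>(j, w). f j w)"
  have "?A *\<^sub>v vec d u = 0\<^sub>v d"
    by (rule eq_vecI) (use assms(2) mat_mult_vec_nth[of _ d f u] in auto)
  moreover have "?A \<in> carrier_mat d d" by simp
  ultimately have "vec d u = 0\<^sub>v d"
    using det_0_iff_vec_prod_zero_field[of ?A d] assms(1) vec_carrier[of d u] by blast
  then show ?thesis by (metis index_vec index_zero_vec(1))
qed

lemma det_zero_imp_kernel_nontrivial:
  fixes f :: "nat \<Rightarrow> nat \<Rightarrow> 'a::field"
  assumes "det (mat d d (\<lambda>(j, w). f j w)) = 0"
  shows "\<exists>u. (\<exists>w<d. u w \<noteq> 0) \<and> (\<forall>j<d. (\<Sum>w<d. f j w * u w) = 0)"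
proof -
  let ?A = "mat d d (\<lambda>(j, w). f j w)"
  obtain v where v: "v \<in> carrier_vec d" "v \<noteq> 0\<^sub>v d" "?A *\<^sub>v v = 0\<^sub>v d"
    using det_0_iff_vec_prod_zero_field[of ?A d] assms by auto
  have vv: "v = vec d (\<lambda>w. v $ w)" using v(1) by auto
  have "\<exists>w<d. v $ w \<noteq> 0" using v(1,2) by (metis eq_vecI carrier_vecD index_zero_vec)
  moreover have "(\<Sum>w<d. f j w * v $ w) = 0" if j: "j < d" for j
    using v(3) vv j mat_mult_vec_nth[OF j, of f "\<lambda>w. v $ w"] by (metis index_zero_vec(1))
  ultimately show ?thesis by blast
qed

lemma det_nonzero_imp_solvable:
  fixes f :: "nat \<Rightarrow> nat \<Rightarrow> 'a::field"
  assumes "det (mat d d (\<lambda>(j, w). f j w)) \<noteq> 0"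
  shows "\<exists>u. \<forall>j<d. (\<Sum>w<d. f j w * u w) = y j"
proof -
  let ?A = "mat d d (\<lambda>(j, w). f j w)"
  have A: "?A \<in> carrier_mat d d" by simp
  have "?A \<in> Units (ring_mat TYPE('a) d ())" by (rule det_non_zero_imp_unit[OF A assms])
  then obtain B where B: "B \<in> carrier_mat d d" "?A * B = 1\<^sub>m d"
    unfolding Units_def ring_mat_def by auto
  let ?v = "B *\<^sub>v vec d y"
  have "?A *\<^sub>v ?v = vec d y" using B A
    by (metis assoc_mult_mat_vec one_mult_mat_vec vec_carrier)
  moreover have "?v = vec d (\<lambda>w. ?v $ w)" using B by auto
  ultimately have "?A *\<^sub>v vec d (\<lambda>w. ?v $ w) = vec d y" by simp
  then have "(\<Sum>w<d. f j w * ?v $ w) = y j" if "j < d" for j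
    using that mat_mult_vec_nth[OF that, of f "\<lambda>w. ?v $ w"] by simp
  then show ?thesis by blast
qed

lemma det_permutation_matrix_nonzero:
  fixes F :: "nat \<Rightarrow> nat \<Rightarrow> 'a::field"
  assumes inj: "inj_on \<pi> {..<d}" and im: "\<pi> ` {..<d} \<subseteq> {..<d}"
    and F: "\<And>j w. j < d \<Longrightarrow> w < d \<Longrightarrow> F j w = (if w = \<pi> j then 1 else 0)"
  shows "det (mat d d (\<lambda>(j, w). F j w)) \<noteq> 0"
proof
  assume "det (mat d d (\<lambda>(j, w). F j w)) = 0"
  then obtain u where u: "\<exists>w<d. u w \<noteq> 0" "\<forall>j<d. (\<Sum>w<d. F j w * u w) = 0"
    using det_zero_imp_kernel_nontrivial by blast
  have "u (\<pi> j) = 0" if j: "j < d" for j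
  proof -
    have "(\<Sum>w<d. F j w * u w) = (\<Sum>w<d. if w = \<pi> j then u w else 0)"
      by (rule sum.cong) (use F j in auto)
    also have "\<dots> = u (\<pi> j)" using im j by (auto simp: sum.delta')
    finally show ?thesis using u(2) j by simp
  qed
  moreover have "\<pi> ` {..<d} = {..<d}" using endo_inj_surj[OF _ im inj] by simp
  ultimately show False using u(1) by (metis imageE lessThan_iff)
qed

definition row_comb :: "nat \<Rightarrow> nat \<Rightarrow> (nat \<Rightarrow> nat \<Rightarrow> 'a::comm_ring_1) \<Rightarrow> (nat \<Rightarrow> 'a) \<Rightarrow> nat \<Rightarrow> 'a" where
  "row_comb k n M u = (\<lambda>c. if c < n then (\<Sum>w<k. u w * M w c) else 0)"

lemma row_space_eq_range_row_comb: "row_space k n M = range (row_comb k n M)"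
  unfolding row_space_def row_comb_def by auto

definition minor :: "nat \<Rightarrow> (nat \<Rightarrow> nat \<Rightarrow> 'a::comm_ring_1) \<Rightarrow> nat list \<Rightarrow> 'a" where
  "minor d M cs = det (mat d d (\<lambda>(j, w). M w (cs ! j)))"

lemma row_comb_eq_0_imp_coeffs_eq_0:
  fixes M :: "nat \<Rightarrow> nat \<Rightarrow> 'a::field"
  assumes cs: "length cs = k" "set cs \<subseteq> {..<n}" and "minor k M cs \<noteq> 0"
    and "\<And>c. c \<in> set cs \<Longrightarrow> row_comb k n M u c = 0"
  shows "\<forall>w<k. u w = 0"
proof (rule det_nonzero_imp_kernel_trivial)
  show "det (mat k k (\<lambda>(j, w). M w (cs ! j))) \<noteq> 0" using assms(3) unfolding minor_def .
  fix j assume "j < k"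
  then have "cs ! j \<in> set cs" using cs by simp
  moreover have "cs ! j < n" using calculation cs by auto
  ultimately have "row_comb k n M u (cs ! j) = 0" "cs ! j < n" using assms(4) by auto
  then show "(\<Sum>w<k. M w (cs ! j) * u w) = 0" unfolding row_comb_def by (simp add: mult.commute)
qed

lemma linear_code_row_space:
  fixes M :: "nat \<Rightarrow> nat \<Rightarrow> 'a::field"
  assumes "length cs = k" "set cs \<subseteq> {..<n}" and "minor k M cs \<noteq> 0"
  shows "linear_code n k (row_space k n M)"
  unfolding linear_code_def
proof (intro conjI exI)
  show "row_space k n M \<subseteq> affine_space n" unfolding row_space_def affine_space_def by auto
  let ?b = "\<lambda>i j. if j < n then M i j else 0"
  have lc: "lin_comb k u ?b = row_comb k n M u" for u
    unfolding lin_comb_def row_comb_def by (rule ext) auto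
  show "row_space k n M = {lin_comb k u ?b |u. True}"
    unfolding row_space_eq_range_row_comb lc by auto
  show "\<forall>u. lin_comb k u ?b = (\<lambda>j. 0) \<longrightarrow> (\<forall>i<k. u i = 0)"
    using row_comb_eq_0_imp_coeffs_eq_0[OF assms] unfolding lc by simp
qed

lemma hamming_wt_le: "hamming_wt n v \<le> n"
  unfolding hamming_wt_def by (rule order.trans[OF card_mono[of "{..<n}"]]) auto

lemma hamming_wt_row_comb_ge:
  fixes M :: "nat \<Rightarrow> nat \<Rightarrow> 'a::field"
  assumes minors: "\<And>cs. length cs = k \<Longrightarrow> distinct cs \<Longrightarrow> set cs \<subseteq> {..<n} \<Longrightarrow> minor k M cs \<noteq> 0"
    and kn: "k \<le> n" and nz: "row_comb k n M u \<noteq> (\<lambda>c. 0)"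
  shows "n - k + 1 \<le> hamming_wt n (row_comb k n M u)"
proof (rule ccontr)
  let ?Z = "{c. c < n \<and> row_comb k n M u c = 0}"
  let ?cs = "take k (sorted_list_of_set ?Z)"
  assume less: "\<not> n - k + 1 \<le> hamming_wt n (row_comb k n M u)"
  have "?Z \<union> {c. c < n \<and> row_comb k n M u c \<noteq> 0} = {..<n}" by auto
  then have "card ?Z + hamming_wt n (row_comb k n M u) = n"
    unfolding hamming_wt_def by (subst card_Un_disjoint[symmetric]) auto
  then have "k \<le> card ?Z" using less kn by linarith
  then have cs: "length ?cs = k" "distinct ?cs" "set ?cs \<subseteq> ?Z"
    using set_take_subset[of k "sorted_list_of_set ?Z"] by auto
  moreover have "set ?cs \<subseteq> {..<n}" using cs(3) by auto
  ultimately have "\<forall>w<k. u w = 0"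
    using minors[of ?cs] by (intro row_comb_eq_0_imp_coeffs_eq_0[of ?cs k n M]) auto
  then have "row_comb k n M u = (\<lambda>c. 0)" unfolding row_comb_def by (intro ext) simp
  then show False using nz by simp
qed

text \<open>A nonzero codeword vanishing on the first k - 1 coordinates: these k - 1 linear conditions on
  the k coefficients are written as a k x k system with a zero row.\<close>
lemma exists_row_comb_hamming_wt_le:
  fixes M :: "nat \<Rightarrow> nat \<Rightarrow> 'a::field"
  assumes k: "1 \<le> k" "k \<le> n"
    and indep: "\<And>u. row_comb k n M u = (\<lambda>c. 0) \<Longrightarrow> \<forall>w<k. u w = 0"
  shows "\<exists>u. row_comb k n M u \<noteq> (\<lambda>c. 0) \<and> hamming_wt n (row_comb k n M u) \<le> n - k + 1"
proof -
  have "det (mat k k (\<lambda>(j, w). if j < k - 1 then M w j else 0)) = 0"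
    by (rule det_zero_row[of _ k "k - 1"]) (use k in auto)
  then obtain u where u: "\<exists>w<k. u w \<noteq> 0"
    and ker: "\<forall>j<k. (\<Sum>w<k. (if j < k - 1 then M w j else 0) * u w) = 0"
    using det_zero_imp_kernel_nontrivial[of k "\<lambda>j w. if j < k - 1 then M w j else 0"] by blast
  have zero: "row_comb k n M u j = 0" if "j < k - 1" for j
  proof -
    have "(\<Sum>w<k. M w j * u w) = 0" using that ker[rule_format, of j] by simp
    then show ?thesis unfolding row_comb_def by (simp add: mult.commute)
  qed
  have "{j. j < n \<and> row_comb k n M u j \<noteq> 0} \<subseteq> {k - 1..<n}"
  proof
    fix j assume "j \<in> {j. j < n \<and> row_comb k n M u j \<noteq> 0}"
    then show "j \<in> {k - 1..<n}" using zero[of j] by (cases "j < k - 1") auto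
  qed
  then have "hamming_wt n (row_comb k n M u) \<le> card {k - 1..<n}"
    unfolding hamming_wt_def by (intro card_mono) auto
  also have "card {k - 1..<n} = n - k + 1" using k by simp
  finally have "hamming_wt n (row_comb k n M u) \<le> n - k + 1" .
  moreover have "row_comb k n M u \<noteq> (\<lambda>c. 0)" using indep u by blast
  ultimately show ?thesis by blast
qed

lemma MDS_code_row_space_if_minors_nonzero:
  fixes M :: "nat \<Rightarrow> nat \<Rightarrow> 'a::field"
  assumes k: "1 \<le> k" "k \<le> n"
    and minors: "\<And>cs. length cs = k \<Longrightarrow> distinct cs \<Longrightarrow> set cs \<subseteq> {..<n} \<Longrightarrow> minor k M cs \<noteq> 0"
  shows "MDS_code n k (row_space k n M)"
proof -
  have cs0: "length [0..<k] = k" "distinct [0..<k]" "set [0..<k] \<subseteq> {..<n}" using k by auto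
  note minor0 = minors[OF cs0]
  have "\<forall>w<k. u w = 0" if "row_comb k n M u = (\<lambda>c. 0)" for u
    using that by (intro row_comb_eq_0_imp_coeffs_eq_0[OF cs0(1,3) minor0]) simp
  then obtain u where u: "row_comb k n M u \<noteq> (\<lambda>c. 0)" "hamming_wt n (row_comb k n M u) \<le> n - k + 1"
    using exists_row_comb_hamming_wt_le[OF k] by blast
  have "min_dist n (row_space k n M) = n - k + 1"
    unfolding min_dist_def row_space_eq_range_row_comb
  proof (rule Min_eqI)
    show "finite {hamming_wt n v |v. v \<in> range (row_comb k n M) \<and> v \<noteq> (\<lambda>j. 0)}"
      by (rule finite_subset[of _ "{..n}"]) (auto simp: hamming_wt_le)
    show "n - k + 1 \<le> y" if "y \<in> {hamming_wt n v |v. v \<in> range (row_comb k n M) \<and> v \<noteq> (\<lambda>j. 0)}" for y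
      using that hamming_wt_row_comb_ge[OF minors k(2)] by auto
    show "n - k + 1 \<in> {hamming_wt n v |v. v \<in> range (row_comb k n M) \<and> v \<noteq> (\<lambda>j. 0)}"
      using u hamming_wt_row_comb_ge[OF minors k(2) u(1)] by (intro CollectI exI[of _ "row_comb k n M u"]) auto
  qed
  then show ?thesis
    using linear_code_row_space[OF cs0(1,3) minor0] unfolding MDS_code_def by simp
qed

lemma row_space_cong:
  assumes "\<And>w c. w < k \<Longrightarrow> c < n \<Longrightarrow> M w c = M' w c"
  shows "row_space k n M = row_space k n M'"
proof -
  have "row_comb k n M u = row_comb k n M' u" for u
    unfolding row_comb_def using assms by (intro ext) (auto intro!: sum.cong)
  then show ?thesis unfolding row_space_eq_range_row_comb by simp
qed

lemma row_comb_mult: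
  "row_comb k n (\<lambda>w c. \<Sum>t<l. P w t * N t c) u = row_comb l n N (\<lambda>t. \<Sum>w<k. u w * P w t)"
proof -
  have "(\<Sum>w<k. u w * (\<Sum>t<l. P w t * N t c)) = (\<Sum>t<l. (\<Sum>w<k. u w * P w t) * N t c)" for c
    by (simp add: sum_distrib_left sum_distrib_right mult.assoc sum.swap[of _ "{..<k}"])
  then show ?thesis unfolding row_comb_def by auto
qed

lemma row_space_mult:
  fixes P N :: "nat \<Rightarrow> nat \<Rightarrow> 'a::field"
  assumes inj: "inj_on \<rho> {..<l}" and rho: "\<And>t. t < l \<Longrightarrow> \<rho> t < k"
    and det: "det (mat l l (\<lambda>(t, t'). P (\<rho> t') t)) \<noteq> 0"
  shows "row_space k n (\<lambda>w c. \<Sum>t<l. P w t * N t c) = row_space l n N"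
proof
  show "row_space k n (\<lambda>w c. \<Sum>t<l. P w t * N t c) \<subseteq> row_space l n N"
    unfolding row_space_eq_range_row_comb row_comb_mult by auto
  show "row_space l n N \<subseteq> row_space k n (\<lambda>w c. \<Sum>t<l. P w t * N t c)"
  proof
    fix v assume "v \<in> row_space l n N"
    then obtain y where v: "v = row_comb l n N y" unfolding row_space_eq_range_row_comb by blast
    obtain z where z: "\<forall>t<l. (\<Sum>t'<l. P (\<rho> t') t * z t') = y t"
      using det_nonzero_imp_solvable[OF det, of y] by blast
    define u where "u w = (if w \<in> \<rho> ` {..<l} then z (inv_into {..<l} \<rho> w) else 0)" for w
    have "(\<Sum>w<k. u w * P w t) = y t" if t: "t < l" for t
    proof -
      have "(\<Sum>w<k. u w * P w t) = (\<Sum>w\<in>\<rho> ` {..<l}. z (inv_into {..<l} \<rho> w) * P w t)"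
        unfolding u_def using rho by (intro sum.mono_neutral_cong_right) auto
      also have "\<dots> = (\<Sum>t'<l. P (\<rho> t') t * z t')"
        by (subst sum.reindex[OF inj]) (use inj in \<open>auto simp: inv_into_f_f mult.commute\<close>)
      finally show ?thesis using z t by simp
    qed
    then have "row_comb l n N (\<lambda>t. \<Sum>w<k. u w * P w t) = v"
      unfolding v row_comb_def by (intro ext) (auto intro!: sum.cong)
    then show "v \<in> row_space k n (\<lambda>w c. \<Sum>t<l. P w t * N t c)"
      unfolding row_space_eq_range_row_comb row_comb_mult[symmetric] by blast
  qed
qed

lemma restrict_code_row_space:
  fixes M :: "nat \<Rightarrow> nat \<Rightarrow> 'a::field"
  assumes K: "K \<subseteq> {..<n}"
  shows "restrict_code K (row_space k n M) = row_space k (card K) (\<lambda>w j. M w (sorted_list_of_set K ! j))"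
proof -
  have "finite K" using K finite_subset by blast
  then have "sorted_list_of_set K ! j < n" if "j < card K" for j
    using K that by (metis length_sorted_list_of_set lessThan_iff nth_mem set_sorted_list_of_set subsetD)
  then have "(\<lambda>j. if j < card K then row_comb k n M u (sorted_list_of_set K ! j) else 0)
      = row_comb k (card K) (\<lambda>w j. M w (sorted_list_of_set K ! j)) u" for u
    unfolding row_comb_def by (intro ext) auto
  then show ?thesis
    unfolding restrict_code_def row_space_eq_range_row_comb image_image by simp
qed

lemma block_start_Suc: "block_start l r (Suc i) = block_start l r i + (l + r i)"
  unfolding block_start_def by simp

lemma block_start_mono: "i \<le> j \<Longrightarrow> block_start l r i \<le> block_start l r j"
  unfolding block_start_def by (rule sum_mono2) auto

lemma block_start_eq: "block_start l r i = i * l + (\<Sum>i'<i. r i')"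
  unfolding block_start_def by (simp add: sum.distrib)

lemma block_unique:
  assumes "c \<in> block l r i" and "c \<in> block l r j"
  shows "i = j"
proof (rule ccontr)
  assume "i \<noteq> j"
  then consider "Suc i \<le> j" | "Suc j \<le> i" by linarith
  then show False
    using assms block_start_mono[of "Suc i" j l r] block_start_mono[of "Suc j" i l r]
    unfolding block_def by cases auto
qed

lemma exists_block: "c < block_start l r m \<Longrightarrow> \<exists>i<m. c \<in> block l r i"
proof (induction m)
  case 0
  then show ?case by (simp add: block_start_def)
next
  case (Suc m)
  show ?case
  proof (cases "c < block_start l r m")
    case True
    then show ?thesis using Suc.IH by (meson less_SucI)
  next
    case False
    then show ?thesis using Suc.prems unfolding block_def by (intro exI[of _ m]) auto
  qed
qed

lemma block_subset: "i < m \<Longrightarrow> block l r i \<subseteq> {..<block_start l r m}"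
  using block_start_mono[of "Suc i" m l r] unfolding block_def by auto

lemma card_block: "card (block l r i) = l + r i"
  unfolding block_def block_start_Suc by simp

definition block_index :: "nat \<Rightarrow> (nat \<Rightarrow> nat) \<Rightarrow> nat \<Rightarrow> nat \<Rightarrow> nat" where
  "block_index l r m c = (THE i. i < m \<and> c \<in> block l r i)"

lemma block_index_eq: "i < m \<Longrightarrow> c \<in> block l r i \<Longrightarrow> block_index l r m c = i"
  unfolding block_index_def using block_unique by blast

lemma block_index:
  assumes "c < block_start l r m"
  shows "block_index l r m c < m" "c \<in> block l r (block_index l r m c)"
proof -
  obtain i where "i < m" "c \<in> block l r i" using exists_block[OF assms] by blast
  then show "block_index l r m c < m" "c \<in> block l r (block_index l r m c)"
    using block_index_eq by simp_all
qed

text \<open>N_mat l B i is the l x (l + r i) matrix (I_l | (B t i j)), so that block i of G is C_i times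
  N_mat l B i.\<close>
definition N_mat :: "nat \<Rightarrow> (nat \<Rightarrow> nat \<Rightarrow> nat \<Rightarrow> 'a::zero_neq_one) \<Rightarrow> nat \<Rightarrow> nat \<Rightarrow> nat \<Rightarrow> 'a" where
  "N_mat l B i t c = (if c < l then (if t = c then 1 else 0) else B t i (c - l))"

lemma G_mat_block:
  fixes A :: "nat \<Rightarrow> nat \<Rightarrow> 'a::comm_ring_1"
  assumes i: "i < m" and c: "c < l + r i"
  shows "G_mat k l m r A B w (block_start l r i + c) = (\<Sum>t<l. C_col k l A i t w * N_mat l B i t c)"
proof -
  have "block_start l r i + c \<in> block l r i" using c unfolding block_def block_start_Suc by simp
  then have G: "G_mat k l m r A B w (block_start l r i + c) =
      (if c < l then C_col k l A i c w else D_col k l A B i (c - l) w)"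
    unfolding G_mat_def block_index_def[symmetric] Let_def using block_index_eq[OF i] by simp
  show ?thesis
  proof (cases "c < l")
    case True
    then have "(\<Sum>t<l. C_col k l A i t w * N_mat l B i t c) = (\<Sum>t<l. if t = c then C_col k l A i t w else 0)"
      unfolding N_mat_def by (intro sum.cong) auto
    also have "\<dots> = C_col k l A i c w" using True by (simp add: sum.delta')
    finally show ?thesis using G True by simp
  next
    case False
    then show ?thesis using G unfolding D_col_def N_mat_def by (simp add: mult.commute)
  qed
qed

lemma G_mat_eq_sum:
  fixes A :: "nat \<Rightarrow> nat \<Rightarrow> 'a::comm_ring_1"
  assumes "c < block_start l r m"
  defines "i \<equiv> block_index l r m c"
  shows "G_mat k l m r A B w c = (\<Sum>t<l. C_col k l A i t w * N_mat l B i t (c - block_start l r i))"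
proof -
  have "i < m" "c \<in> block l r i" using block_index[OF assms(1)] unfolding i_def by auto
  then show ?thesis
    using G_mat_block[of i m "c - block_start l r i" l r k A B w]
    unfolding block_def block_start_Suc by auto
qed

lemma inj_on_add_mod:
  assumes "l \<le> (k::nat)" shows "inj_on (\<lambda>t. (a + t) mod k) {..<l}"
proof (rule inj_onI)
  have neq: "(a + x) mod k \<noteq> (a + y) mod k" if xy: "x < y" "y < l" for x y
  proof
    assume "(a + x) mod k = (a + y) mod k"
    then have "k dvd y - x" using mod_eq_dvd_iff_nat[of "a + x" "a + y" k] xy by simp
    moreover have "0 < y - x" "y - x < k" using xy assms by auto
    ultimately show False using nat_dvd_not_less by blast
  qed
  fix t t' assume "t \<in> {..<l}" "t' \<in> {..<l}" "(a + t) mod k = (a + t') mod k"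
  then show "t = t'" using neq[of t t'] neq[of t' t] by (cases t t' rule: linorder_cases) auto
qed

definition col_selections :: "nat \<Rightarrow> nat set \<Rightarrow> nat list set" where
  "col_selections d S = {cs. length cs = d \<and> distinct cs \<and> set cs \<subseteq> S}"

lemma finite_col_selections: "finite S \<Longrightarrow> finite (col_selections d S)"
  unfolding col_selections_def
  by (rule finite_subset[OF _ finite_lists_length_eq[of S d]]) auto

text \<open>The k-subsets of the columns that survive some erasure of r i columns in every block i.\<close>
definition admissible_selections :: "nat \<Rightarrow> nat \<Rightarrow> nat \<Rightarrow> (nat \<Rightarrow> nat) \<Rightarrow> nat list set" where
  "admissible_selections k l m r =
     {cs \<in> col_selections k {..<block_start l r m}. \<forall>i<m. card (set cs \<inter> block l r i) \<le> l}"

definition erasure_pattern :: "nat \<Rightarrow> (nat \<Rightarrow> nat) \<Rightarrow> nat \<Rightarrow> (nat \<Rightarrow> nat set) \<Rightarrow> bool" where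
  "erasure_pattern l r m E \<longleftrightarrow> (\<forall>i<m. E i \<subseteq> block l r i \<and> card (E i) = r i)"

lemma kept_columns_inter_block:
  assumes E: "erasure_pattern l r m E" and i: "i < m"
  shows "({0..<block_start l r m} - (\<Union>i<m. E i)) \<inter> block l r i = block l r i - E i"
proof -
  have "c \<notin> E j" if "c \<in> block l r i - E i" "j < m" for c j
    using that E block_unique[of c l r i j] unfolding erasure_pattern_def by blast
  then show ?thesis using block_subset[OF i, of l r] i by auto
qed

lemma card_kept_columns_inter_block:
  assumes E: "erasure_pattern l r m E" and i: "i < m"
  shows "card (({0..<block_start l r m} - (\<Union>i<m. E i)) \<inter> block l r i) = l"
  using E i card_block[of l r i] card_Diff_subset[of "E i" "block l r i"]
  unfolding kept_columns_inter_block[OF E i] erasure_pattern_def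
  by (simp add: block_def finite_subset)

lemma card_kept_columns:
  assumes E: "erasure_pattern l r m E"
  shows "card ({0..<block_start l r m} - (\<Union>i<m. E i)) = m * l"
proof -
  let ?K = "{0..<block_start l r m} - (\<Union>i<m. E i)"
  have "?K \<subseteq> (\<Union>i<m. ?K \<inter> block l r i)"
  proof
    fix c assume "c \<in> ?K"
    then show "c \<in> (\<Union>i<m. ?K \<inter> block l r i)" using exists_block[of c l r m] by auto
  qed
  then have "?K = (\<Union>i<m. ?K \<inter> block l r i)" by blast
  also have "card \<dots> = (\<Sum>i<m. card (?K \<inter> block l r i))"
    using block_unique by (intro card_UN_disjoint) (auto simp: block_def)
  also have "\<dots> = m * l" using card_kept_columns_inter_block[OF E] by simp
  finally show ?thesis .
qed

lemma map_sorted_kept_columns_admissible: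
  assumes K: "K \<subseteq> {..<block_start l r m}" "\<And>i. i < m \<Longrightarrow> card (K \<inter> block l r i) \<le> l"
    and cs: "cs \<in> col_selections k {..<card K}"
  shows "map (\<lambda>j. sorted_list_of_set K ! j) cs \<in> admissible_selections k l m r"
proof -
  let ?sl = "sorted_list_of_set K"
  have fin: "finite K" using K(1) finite_subset by blast
  have inj: "inj_on (\<lambda>j. ?sl ! j) (set cs)"
    using inj_on_nth[of ?sl "set cs"] cs fin unfolding col_selections_def by auto
  have sub: "set (map (\<lambda>j. ?sl ! j) cs) \<subseteq> K"
    using cs fin unfolding col_selections_def
    by (auto simp: subset_iff) (metis length_sorted_list_of_set nth_mem set_sorted_list_of_set)
  have "card (set (map (\<lambda>j. ?sl ! j) cs) \<inter> block l r i) \<le> l" if "i < m" for i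
    using K(2)[OF that] card_mono[of "K \<inter> block l r i"] sub fin by (meson Int_mono order.trans
      finite_Int subset_refl)
  then show ?thesis
    using cs inj sub K(1) unfolding admissible_selections_def col_selections_def
    by (auto simp: distinct_map)
qed

lemma MDS_code_punctured_if_minors_nonzero:
  fixes M :: "nat \<Rightarrow> nat \<Rightarrow> 'a::field"
  assumes k: "1 \<le> k" "k \<le> m * l" and E: "erasure_pattern l r m E"
    and minors: "\<And>cs. cs \<in> admissible_selections k l m r \<Longrightarrow> minor k M cs \<noteq> 0"
  shows "MDS_code (m * l) k
    (restrict_code ({0..<block_start l r m} - (\<Union>i<m. E i)) (row_space k (block_start l r m) M))"
proof -
  let ?K = "{0..<block_start l r m} - (\<Union>i<m. E i)"
  have K: "?K \<subseteq> {..<block_start l r m}" "\<And>i. i < m \<Longrightarrow> card (?K \<inter> block l r i) \<le> l"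
    using card_kept_columns_inter_block[OF E] by auto
  let ?M = "\<lambda>w j. M w (sorted_list_of_set ?K ! j)"
  have "minor k ?M cs \<noteq> 0" if "cs \<in> col_selections k {..<card ?K}" for cs
  proof -
    have "minor k ?M cs = minor k M (map (\<lambda>j. sorted_list_of_set ?K ! j) cs)"
      using that unfolding minor_def col_selections_def by (intro arg_cong[where f=det] eq_matI) auto
    then show ?thesis using minors map_sorted_kept_columns_admissible[OF K that] by simp
  qed
  then have "MDS_code (card ?K) k (row_space k (card ?K) ?M)"
    using k card_kept_columns[OF E]
    by (intro MDS_code_row_space_if_minors_nonzero) (auto simp: col_selections_def)
  then show ?thesis
    using restrict_code_row_space[OF K(1), of k M] card_kept_columns[OF E] by simp
qed

lemma linear_code_if_minors_nonzero:
  fixes M :: "nat \<Rightarrow> nat \<Rightarrow> 'a::field"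
  assumes k: "k \<le> m * l"
    and minors: "\<And>cs. cs \<in> admissible_selections k l m r \<Longrightarrow> minor k M cs \<noteq> 0"
  shows "linear_code (block_start l r m) k (row_space k (block_start l r m) M)"
proof -
  define E where "E i = {block_start l r i + l..<block_start l r (Suc i)}" for i
  have E: "erasure_pattern l r m E"
    unfolding erasure_pattern_def E_def block_def block_start_Suc by auto
  let ?K = "{0..<block_start l r m} - (\<Union>i<m. E i)"
  let ?cs = "map (\<lambda>j. sorted_list_of_set ?K ! j) [0..<k]"
  have "?cs \<in> admissible_selections k l m r"
    using card_kept_columns_inter_block[OF E] card_kept_columns[OF E] k
    by (intro map_sorted_kept_columns_admissible) (auto simp: col_selections_def)
  then show ?thesis
    using minors unfolding admissible_selections_def col_selections_def
    by (intro linear_code_row_space[of ?cs]) auto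
qed

text \<open>Block i of G is C_i N_i. The rows (i l + t) mod k, t < l, are distinct since l \<le> k, so the
  hypothesis on C_i says that it has full column rank.\<close>
lemma MDS_code_local_if_minors_nonzero:
  fixes A :: "nat \<Rightarrow> nat \<Rightarrow> 'a::field"
  assumes l: "1 \<le> l" "l \<le> k" and i: "i < m"
    and C_minor: "det (mat l l (\<lambda>(t, t'). C_col k l A i t ((i * l + t') mod k))) \<noteq> 0"
    and N_minors: "\<And>cs. cs \<in> col_selections l {..<l + r i} \<Longrightarrow> minor l (N_mat l B i) cs \<noteq> 0"
  shows "MDS_code (r i + l) l
    (restrict_code (block l r i) (row_space k (block_start l r m) (G_mat k l m r A B)))"
proof -
  let ?G = "G_mat k l m r A B"
  have sl: "sorted_list_of_set (block l r i) ! c = block_start l r i + c" if "c < l + r i" for c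
    using that unfolding block_def block_start_Suc by simp
  have "restrict_code (block l r i) (row_space k (block_start l r m) ?G) =
      row_space k (l + r i) (\<lambda>w j. ?G w (sorted_list_of_set (block l r i) ! j))"
    using restrict_code_row_space[OF block_subset[OF i, of l r], of k ?G] card_block[of l r i] by simp
  also have "\<dots> = row_space k (l + r i) (\<lambda>w c. \<Sum>t<l. C_col k l A i t w * N_mat l B i t c)"
    using G_mat_block[OF i] sl by (intro row_space_cong) simp
  also have "\<dots> = row_space l (l + r i) (N_mat l B i)"
    using inj_on_add_mod[OF l(2)] l C_minor by (intro row_space_mult) auto
  also have "MDS_code (l + r i) l \<dots>"
    using l N_minors by (intro MDS_code_row_space_if_minors_nonzero) (auto simp: col_selections_def)
  finally show ?thesis by (simp add: add.commute)
qed

lemma PMDS_code_if_minors_nonzero: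
  fixes A :: "nat \<Rightarrow> nat \<Rightarrow> 'a::field"
  assumes l: "1 \<le> l" "l \<le> k" and kml: "k < m * l" and n: "n = block_start l r m"
    and C_minors: "\<And>i. i < m \<Longrightarrow> det (mat l l (\<lambda>(t, t'). C_col k l A i t ((i * l + t') mod k))) \<noteq> 0"
    and N_minors: "\<And>i cs. i < m \<Longrightarrow> cs \<in> col_selections l {..<l + r i} \<Longrightarrow>
      minor l (N_mat l B i) cs \<noteq> 0"
    and G_minors: "\<And>cs. cs \<in> admissible_selections k l m r \<Longrightarrow> minor k (G_mat k l m r A B) cs \<noteq> 0"
  shows "PMDS_code n k l m r (row_space k n (G_mat k l m r A B))"
proof -
  have "m * l \<le> n" using n block_start_eq[of l r m] by simp
  then show ?thesis
    unfolding PMDS_code_def n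
    using l kml MDS_code_local_if_minors_nonzero[OF l _ C_minors N_minors]
      linear_code_if_minors_nonzero[OF _ G_minors] MDS_code_punctured_if_minors_nonzero[OF _ _ _ G_minors]
    unfolding erasure_pattern_def by (auto simp: n)
qed

lemma mult_add_less_mult: "i < m \<Longrightarrow> t < l \<Longrightarrow> i * l + t < m * (l::nat)"
proof -
  assume "i < m" "t < l"
  then have "i * l + t < Suc i * l" by simp
  also have "\<dots> \<le> m * l" using \<open>i < m\<close> by (intro mult_le_mono1) simp
  finally show ?thesis .
qed

lemma beta_coord_bound:
  fixes r :: "nat \<Rightarrow> nat"
  assumes t: "t < l" and i: "i < m" and j: "j < r i"
  shows "(\<Sum>i'<i. r i') + j < (\<Sum>i'<m. r i')"
    and "t * (\<Sum>i'<m. r i') + (\<Sum>i'<i. r i') + j < l * (\<Sum>i'<m. r i')"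
proof -
  have "(\<Sum>i'<i. r i') + j < (\<Sum>i'<Suc i. r i')" using j by simp
  also have "\<dots> \<le> (\<Sum>i'<m. r i')" using i by (intro sum_mono2) auto
  finally show q: "(\<Sum>i'<i. r i') + j < (\<Sum>i'<m. r i')" .
  have "t * (\<Sum>i'<m. r i') + (\<Sum>i'<m. r i') \<le> l * (\<Sum>i'<m. r i')"
    using t by (metis Suc_leI add.commute mult_Suc mult_le_mono1)
  then show "t * (\<Sum>i'<m. r i') + (\<Sum>i'<i. r i') + j < l * (\<Sum>i'<m. r i')" using q by linarith
qed

lemma Least_sum_lessThan_Suc_eq:
  fixes r :: "nat \<Rightarrow> nat"
  assumes "j < r i"
  shows "(LEAST i'. (\<Sum>i''<i. r i'') + j < (\<Sum>i''<Suc i'. r i'')) = i"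
proof (rule Least_equality)
  show "(\<Sum>i''<i. r i'') + j < (\<Sum>i''<Suc i. r i'')" using assms by simp
  show "i \<le> y" if "(\<Sum>i''<i. r i'') + j < (\<Sum>i''<Suc y. r i'')" for y
  proof (rule ccontr)
    assume "\<not> i \<le> y"
    then have "(\<Sum>i''<Suc y. r i'') \<le> (\<Sum>i''<i. r i'')" by (intro sum_mono2) auto
    then show False using that by simp
  qed
qed

lemma exists_point_with_coords:
  fixes \<alpha> :: "nat \<Rightarrow> nat \<Rightarrow> 'a::comm_ring_1" and \<beta> :: "nat \<Rightarrow> nat \<Rightarrow> nat \<Rightarrow> 'a"
  assumes R: "R = (\<Sum>i<m. r i)"
  shows "\<exists>x\<in>affine_space (s * k + l * R). (\<forall>w<k. \<forall>z<s. alpha_of s x w z = \<alpha> w z) \<and>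
     (\<forall>t<l. \<forall>i<m. \<forall>j<r i. beta_of s k m r x t i j = \<beta> t i j)"
proof -
  define b0 where "b0 i = (\<Sum>i'<i. r i')" for i
  define ix where "ix q = (LEAST i. q < b0 (Suc i))" for q
  define x where "x p = (if p < s * k then \<alpha> (p div s) (p mod s)
     else if p < s * k + l * R then
       \<beta> ((p - s * k) div R) (ix ((p - s * k) mod R)) ((p - s * k) mod R - b0 (ix ((p - s * k) mod R)))
     else 0)" for p
  have "x \<in> affine_space (s * k + l * R)" unfolding affine_space_def x_def by auto
  moreover have "alpha_of s x w z = \<alpha> w z" if w: "w < k" and z: "z < s" for w z
  proof -
    have "w * s + z < s * k" using mult_add_less_mult[OF w z] by (simp add: mult.commute)
    then show ?thesis unfolding alpha_of_def x_def using z by simp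
  qed
  moreover have "beta_of s k m r x t i j = \<beta> t i j" if t: "t < l" and i: "i < m" and j: "j < r i" for t i j
  proof -
    note bd = beta_coord_bound[where r=r and i=i and m=m and l=l, OF t i j]
    let ?q = "b0 i + j"
    have qR: "?q < R" using bd(1) R unfolding b0_def by simp
    have ixq: "ix ?q = i" unfolding ix_def b0_def by (rule Least_sum_lessThan_Suc_eq[where r=r, OF j])
    have "beta_of s k m r x t i j = x (s * k + (t * R + ?q))"
      unfolding beta_of_def b0_def R[symmetric] by (simp add: add.assoc)
    also have "\<dots> = \<beta> t i j"
    proof -
      have "s * k + (t * R + ?q) < s * k + l * R" using bd(2) R unfolding b0_def by simp
      moreover have "(t * R + ?q) div R = t" "(t * R + ?q) mod R = ?q" using qR by auto
      ultimately show ?thesis unfolding x_def using ixq by simp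
    qed
    finally show ?thesis .
  qed
  ultimately show ?thesis by blast
qed

lemma poly_funs_alpha:
  "w < k \<Longrightarrow> z < s \<Longrightarrow> (\<lambda>x. alpha_of s x w z) \<in> poly_funs (s * k + l * R)"
  unfolding alpha_of_def
  by (rule poly_funs.pf_var) (use mult_add_less_mult[of w k z s] in \<open>simp add: mult.commute\<close>)

lemma poly_funs_beta:
  fixes r :: "nat \<Rightarrow> nat"
  assumes "R = (\<Sum>i<m. r i)" and "t < l" and "i < m" and "j < r i"
  shows "(\<lambda>x. beta_of s k m r x t i j) \<in> poly_funs (s * k + l * R)"
  unfolding beta_of_def by (rule poly_funs.pf_var) (use beta_coord_bound[where r=r and i=i and m=m and l=l, OF assms(2-4)] assms(1) in simp)

lemma poly_funs_C_col:
  assumes ms: "k + s = m * l" and "i < m" "t < l" and w: "w < k"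
  shows "(\<lambda>x. C_col k l (alpha_of s x) i t w) \<in> poly_funs (s * k + l * R)"
proof (cases "i * l + t < k")
  case True
  then show ?thesis unfolding C_col_def IA_col_def by (simp add: poly_funs.pf_const)
next
  case False
  then have "i * l + t - k < s" using mult_add_less_mult[OF assms(2,3)] ms by linarith
  then show ?thesis unfolding C_col_def IA_col_def using False poly_funs_alpha[OF w] by simp
qed

lemma poly_funs_N_mat:
  fixes r :: "nat \<Rightarrow> nat"
  assumes R: "R = (\<Sum>i<m. r i)" and i: "i < m" and t: "t < l" and c: "c < l + r i"
  shows "(\<lambda>x. N_mat l (beta_of s k m r x) i t c) \<in> poly_funs (s * k + l * R)"
proof (cases "c < l")
  case True
  then show ?thesis unfolding N_mat_def by (simp add: poly_funs.pf_const)
next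
  case False
  then have "c - l < r i" using c by linarith
  then show ?thesis unfolding N_mat_def using poly_funs_beta[OF R t i, of "c - l" s k] False by simp
qed

lemma poly_funs_G_mat:
  fixes r :: "nat \<Rightarrow> nat"
  assumes R: "R = (\<Sum>i<m. r i)" and ms: "k + s = m * l" and w: "w < k" and c: "c < block_start l r m"
  shows "(\<lambda>x. G_mat k l m r (alpha_of s x) (beta_of s k m r x) w c :: 'a::comm_ring_1) \<in> poly_funs (s * k + l * R)"
proof -
  let ?i = "block_index l r m c"
  have i: "?i < m" and o: "c - block_start l r ?i < l + r ?i"
    using block_index[OF c] unfolding block_def block_start_Suc by auto
  have "(\<lambda>x. \<Sum>t<l. C_col k l (alpha_of s x) ?i t w * N_mat l (beta_of s k m r x) ?i t (c - block_start l r ?i) :: 'a)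
      \<in> poly_funs (s * k + l * R)"
    using poly_funs_C_col[OF ms i _ w] poly_funs_N_mat[OF R i _ o]
    by (intro poly_funs_sum poly_funs.pf_mult) auto
  then show ?thesis by (simp only: G_mat_eq_sum[OF c])
qed

lemma C_col_cong:
  assumes "\<And>w z. w < k \<Longrightarrow> z < s \<Longrightarrow> A w z = A' w z" and ms: "k + s = m * l"
    and "i < m" "t < l" and "w < k"
  shows "C_col k l A i t w = C_col k l A' i t w"
  using assms mult_add_less_mult[OF assms(3,4)] unfolding C_col_def IA_col_def by simp

lemma N_mat_cong:
  assumes "\<And>t j. t < l \<Longrightarrow> j < r i \<Longrightarrow> B t i j = B' t i j" and "t < l" and "c < l + r i"
  shows "N_mat l B i t c = N_mat l B' i t c"
  unfolding N_mat_def using assms by auto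

lemma G_mat_cong:
  fixes A A' :: "nat \<Rightarrow> nat \<Rightarrow> 'a::comm_ring_1"
  assumes A: "\<And>w z. w < k \<Longrightarrow> z < s \<Longrightarrow> A w z = A' w z" and ms: "k + s = m * l"
    and B: "\<And>t i j. t < l \<Longrightarrow> i < m \<Longrightarrow> j < r i \<Longrightarrow> B t i j = B' t i j"
    and w: "w < k" and c: "c < block_start l r m"
  shows "G_mat k l m r A B w c = G_mat k l m r A' B' w c"
proof -
  let ?i = "block_index l r m c"
  have i: "?i < m" and o: "c - block_start l r ?i < l + r ?i"
    using block_index[OF c] unfolding block_def block_start_Suc by auto
  show ?thesis
    unfolding G_mat_eq_sum[OF c]
    using C_col_cong[OF A ms i _ w] N_mat_cong[where B=B and B'=B' and i="?i" and l=l and r=r, OF B[OF _ i] _ o]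
    by (intro sum.cong) auto
qed

lemma exists_inj_into_lessThan_fixing:
  assumes fin: "finite S" and card: "card S \<le> l"
  shows "\<exists>\<psi>. inj_on \<psi> S \<and> \<psi> ` S \<subseteq> {..<l} \<and> (\<forall>c\<in>S. c < l \<longrightarrow> \<psi> c = c)"
proof -
  let ?Lo = "S \<inter> {..<l}" and ?Hi = "S - {..<l}"
  have "card ?Hi = card S - card ?Lo" using fin by (simp add: card_Diff_subset_Int)
  moreover have "card ({..<l} - ?Lo) = l - card ?Lo" by (simp add: card_Diff_subset)
  ultimately have "card ?Hi \<le> card ({..<l} - ?Lo)" using card by linarith
  then obtain \<rho> where \<rho>: "\<rho> ` ?Hi \<subseteq> {..<l} - ?Lo" "inj_on \<rho> ?Hi"
    using card_le_inj[of ?Hi "{..<l} - ?Lo"] fin by auto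
  let ?\<psi> = "\<lambda>c. if c < l then c else \<rho> c"
  have "inj_on ?\<psi> S"
  proof (rule inj_onI)
    fix a b assume ab: "a \<in> S" "b \<in> S" "?\<psi> a = ?\<psi> b"
    have "\<rho> c \<notin> ?Lo" if "c \<in> ?Hi" for c using \<rho>(1) that by blast
    then show "a = b"
      using ab inj_onD[OF \<rho>(2), of a b] by (cases "a < l"; cases "b < l") auto
  qed
  moreover have "?\<psi> ` S \<subseteq> {..<l}" using \<rho>(1) by auto
  moreover have "\<forall>c\<in>S. c < l \<longrightarrow> ?\<psi> c = c" by simp
  ultimately show ?thesis by blast
qed

lemma C_minor_witness:
  assumes "l \<le> k"
  shows "det (mat l l (\<lambda>(t, t'). C_col k l (\<lambda>w z. if w = z mod k then 1 else 0 :: 'a::field) i t ((i * l + t') mod k))) \<noteq> 0"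
proof (rule det_permutation_matrix_nonzero[where \<pi>="\<lambda>j. j"])
  have IA: "IA_col k (\<lambda>w z. if w = z mod k then 1 else 0 :: 'a) c w = (if w = c mod k then 1 else 0)" for c w
    unfolding IA_col_def by (simp add: le_mod_geq)
  fix j w assume "j < l" "w < l"
  then have "(i * l + w) mod k = (i * l + j) mod k \<longleftrightarrow> w = j"
    using inj_on_add_mod[OF assms, of "i * l"] by (auto dest: inj_onD)
  then show "C_col k l (\<lambda>w z. if w = z mod k then 1 else 0 :: 'a) i j ((i * l + w) mod k) = (if w = j then 1 else 0)"
    unfolding C_col_def IA by simp
qed auto

lemma N_mat_eq_unit:
  assumes "c < l \<Longrightarrow> \<Psi> i c = c"
  shows "N_mat l (\<lambda>t i j. if t = \<Psi> i (l + j) then 1 else 0) i t c = (if t = \<Psi> i c then 1 else (0::'a::zero_neq_one))"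
  using assms unfolding N_mat_def by simp

lemma N_minor_witness:
  assumes cs: "cs \<in> col_selections l S"
  shows "\<exists>B :: nat \<Rightarrow> nat \<Rightarrow> nat \<Rightarrow> 'a::field. minor l (N_mat l B i) cs \<noteq> 0"
proof -
  have "card (set cs) \<le> l" using cs unfolding col_selections_def by (simp add: distinct_card)
  then obtain \<psi> where \<psi>: "inj_on \<psi> (set cs)" "\<psi> ` set cs \<subseteq> {..<l}" "\<forall>c\<in>set cs. c < l \<longrightarrow> \<psi> c = c"
    using exists_inj_into_lessThan_fixing[of "set cs" l] by auto
  have csj: "cs ! j \<in> set cs" if "j < l" for j using cs that unfolding col_selections_def by auto
  have "minor l (N_mat l (\<lambda>t i j. if t = \<psi> (l + j) then 1 else 0 :: 'a) i) cs \<noteq> 0"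
    unfolding minor_def
  proof (rule det_permutation_matrix_nonzero[where \<pi>="\<lambda>j. \<psi> (cs ! j)"])
    have "inj_on (\<lambda>j. cs ! j) {..<l}" using cs inj_on_nth[of cs "{..<l}"] unfolding col_selections_def by simp
    then show "inj_on (\<lambda>j. \<psi> (cs ! j)) {..<l}"
      using \<psi>(1) csj by (auto simp: inj_on_def)
    show "(\<lambda>j. \<psi> (cs ! j)) ` {..<l} \<subseteq> {..<l}" using \<psi>(2) csj by auto
    show "N_mat l (\<lambda>t i j. if t = \<psi> (l + j) then 1 else 0) i w (cs ! j) = (if w = \<psi> (cs ! j) then 1 else 0)"
      if "j < l" for j w
      using \<psi>(3) csj[OF that] unfolding N_mat_def by auto
  qed
  then show ?thesis by blast
qed

lemma exists_IA_cols_unit: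
  assumes "finite S" and "card S \<le> k"
  shows "\<exists>(A :: nat \<Rightarrow> nat \<Rightarrow> 'a::zero_neq_one) \<tau>. inj_on \<tau> S \<and> \<tau> ` S \<subseteq> {..<k} \<and>
     (\<forall>c\<in>S. \<forall>w. IA_col k A c w = (if w = \<tau> c then 1 else 0))"
proof -
  obtain \<tau> where \<tau>: "inj_on \<tau> S" "\<tau> ` S \<subseteq> {..<k}" "\<forall>c\<in>S. c < k \<longrightarrow> \<tau> c = c"
    using exists_inj_into_lessThan_fixing[OF assms] by blast
  define A where "A w z = (if w = \<tau> (k + z) then 1 else (0::'a))" for w z
  have "IA_col k A c w = (if w = \<tau> c then 1 else 0)" if "c \<in> S" for c w
    using \<tau>(3) that unfolding IA_col_def A_def by auto
  then show ?thesis using \<tau>(1,2) by blast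
qed

lemma G_mat_col_eq_IA_col:
  fixes A :: "nat \<Rightarrow> nat \<Rightarrow> 'a::comm_ring_1"
  assumes i: "i < m" and c: "c < l + r i"
    and \<Psi>: "\<Psi> i c < l" "c < l \<Longrightarrow> \<Psi> i c = c"
  shows "G_mat k l m r A (\<lambda>t i j. if t = \<Psi> i (l + j) then 1 else 0) w (block_start l r i + c) =
    IA_col k A (i * l + \<Psi> i c) w"
proof -
  have "G_mat k l m r A (\<lambda>t i j. if t = \<Psi> i (l + j) then 1 else 0) w (block_start l r i + c) =
      (\<Sum>t<l. C_col k l A i t w * N_mat l (\<lambda>t i j. if t = \<Psi> i (l + j) then 1 else 0) i t c)"
    by (rule G_mat_block[where r=r and l=l and m=m, OF i c])
  also have "\<dots> = (\<Sum>t<l. C_col k l A i t w * (if t = \<Psi> i c then 1 else 0))"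
    by (simp add: N_mat_eq_unit \<Psi>(2))
  also have "\<dots> = C_col k l A i (\<Psi> i c) w"
    using \<Psi>(1) by (simp add: if_distrib sum.delta' cong: if_cong)
  finally show ?thesis unfolding C_col_def .
qed

lemma exists_inj_block_offsets:
  assumes "\<And>i. i < m \<Longrightarrow> card (C \<inter> block l r i) \<le> l"
  defines "S i \<equiv> (\<lambda>c. c - block_start l r i) ` (C \<inter> block l r i)"
  shows "\<exists>\<Psi>. \<forall>i\<in>{..<m}. inj_on (\<Psi> i) (S i) \<and> \<Psi> i ` S i \<subseteq> {..<l} \<and> (\<forall>c\<in>S i. c < l \<longrightarrow> \<Psi> i c = c)"
proof (rule bchoice, rule ballI)
  fix i assume "i \<in> {..<m}"
  moreover have "card (S i) \<le> card (C \<inter> block l r i)" unfolding S_def by (rule card_image_le) (simp add: block_def)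
  ultimately have "card (S i) \<le> l" using assms(1) by force
  then show "\<exists>\<psi>. inj_on \<psi> (S i) \<and> \<psi> ` S i \<subseteq> {..<l} \<and> (\<forall>c\<in>S i. c < l \<longrightarrow> \<psi> c = c)"
    by (intro exists_inj_into_lessThan_fixing) (simp_all add: S_def block_def)
qed

text \<open>B is the 0-1 matrix for which N_i sends the at most l selected columns of block i to distinct
  unit vectors, so the selected columns of G are distinct columns of (I_k | A).\<close>
lemma exists_B_G_mat_cols_eq_IA_cols:
  fixes r :: "nat \<Rightarrow> nat"
  assumes cs: "cs \<in> admissible_selections k l m r" and l: "1 \<le> l"
  shows "\<exists>(B :: nat \<Rightarrow> nat \<Rightarrow> nat \<Rightarrow> 'a::comm_ring_1) \<gamma>. inj_on \<gamma> (set cs) \<and>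
    (\<forall>A w. \<forall>c\<in>set cs. G_mat k l m r A B w c = IA_col k A (\<gamma> c) w)"
proof -
  let ?bi = "block_index l r m"
  define off where "off c = c - block_start l r (?bi c)" for c
  define S where "S i = (\<lambda>c. c - block_start l r i) ` (set cs \<inter> block l r i)" for i
  obtain \<Psi> where \<Psi>: "\<forall>i\<in>{..<m}. inj_on (\<Psi> i) (S i) \<and> \<Psi> i ` S i \<subseteq> {..<l} \<and>
      (\<forall>c\<in>S i. c < l \<longrightarrow> \<Psi> i c = c)"
    using exists_inj_block_offsets[of m "set cs" l r] cs
    unfolding S_def admissible_selections_def by auto
  have col: "?bi c < m" "c \<in> block l r (?bi c)" "off c \<in> S (?bi c)"
    "off c < l + r (?bi c)" "block_start l r (?bi c) + off c = c" if "c \<in> set cs" for c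
  proof -
    have "c < block_start l r m" using cs that unfolding admissible_selections_def col_selections_def by auto
    from block_index[OF this] show "?bi c < m" "c \<in> block l r (?bi c)" by simp_all
    then show "off c \<in> S (?bi c)" using that unfolding S_def off_def by blast
    show "off c < l + r (?bi c)" "block_start l r (?bi c) + off c = c"
      using \<open>c \<in> block l r (?bi c)\<close> unfolding off_def block_def block_start_Suc by auto
  qed
  have \<Psi>c: "\<Psi> (?bi c) (off c) < l" if "c \<in> set cs" for c
    using \<Psi> col[OF that] by blast
  define B where "B t i j = (if t = \<Psi> i (l + j) then 1 else (0::'a))" for t i j
  define \<gamma> where "\<gamma> c = ?bi c * l + \<Psi> (?bi c) (off c)" for c
  have "G_mat k l m r A B w c = IA_col k A (\<gamma> c) w" if c: "c \<in> set cs" for A w c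
  proof -
    have "off c < l \<Longrightarrow> \<Psi> (?bi c) (off c) = off c" using \<Psi> col(1,3)[OF c] by blast
    then show ?thesis
      using G_mat_col_eq_IA_col[where r=r and l=l and m=m and \<Psi>=\<Psi>, OF col(1,4)[OF c] \<Psi>c[OF c], of k A w]
        col(5)[OF c]
      unfolding B_def \<gamma>_def by simp
  qed
  moreover have "inj_on \<gamma> (set cs)"
  proof (rule inj_onI)
    fix a b assume a: "a \<in> set cs" and b: "b \<in> set cs" and eq: "\<gamma> a = \<gamma> b"
    have "\<gamma> c div l = ?bi c" "\<gamma> c mod l = \<Psi> (?bi c) (off c)" if "c \<in> set cs" for c
      using \<Psi>c[OF that] l unfolding \<gamma>_def by auto
    then have bi: "?bi a = ?bi b" and "\<Psi> (?bi a) (off a) = \<Psi> (?bi a) (off b)"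
      using a b eq by metis+
    moreover have "inj_on (\<Psi> (?bi a)) (S (?bi a))" using \<Psi> col(1)[OF a] by blast
    ultimately have "off a = off b" using col(3)[OF a] col(3)[OF b] by (simp add: inj_on_eq_iff)
    then show "a = b" using col(5)[OF a] col(5)[OF b] bi by metis
  qed
  ultimately show ?thesis by blast
qed

lemma G_minor_witness:
  assumes cs: "cs \<in> admissible_selections k l m r" and l: "1 \<le> l"
  shows "\<exists>(A :: nat \<Rightarrow> nat \<Rightarrow> 'a::field) B. minor k (G_mat k l m r A B) cs \<noteq> 0"
proof -
  obtain B :: "nat \<Rightarrow> nat \<Rightarrow> nat \<Rightarrow> 'a" and \<gamma> where \<gamma>: "inj_on \<gamma> (set cs)"
    and G: "\<And>A w c. c \<in> set cs \<Longrightarrow> G_mat k l m r A B w c = IA_col k A (\<gamma> c) w"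
    using exists_B_G_mat_cols_eq_IA_cols[OF cs l] by blast
  have cs': "length cs = k" "distinct cs"
    using cs unfolding admissible_selections_def col_selections_def by auto
  then have "card (\<gamma> ` set cs) = k" using card_image[OF \<gamma>] by (simp add: distinct_card)
  then obtain A :: "nat \<Rightarrow> nat \<Rightarrow> 'a" and \<tau> where \<tau>: "inj_on \<tau> (\<gamma> ` set cs)" "\<tau> ` \<gamma> ` set cs \<subseteq> {..<k}"
    and IA: "\<forall>c\<in>\<gamma> ` set cs. \<forall>w. IA_col k A c w = (if w = \<tau> c then 1 else 0)"
    using exists_IA_cols_unit[of "\<gamma> ` set cs" k] by auto
  have csj: "cs ! j \<in> set cs" if "j < k" for j using cs' that by simp
  have "minor k (G_mat k l m r A B) cs \<noteq> 0"
    unfolding minor_def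
  proof (rule det_permutation_matrix_nonzero[where \<pi>="\<lambda>j. \<tau> (\<gamma> (cs ! j))"])
    have "inj_on (\<lambda>j. cs ! j) {..<k}" using cs' inj_on_nth[of cs "{..<k}"] by simp
    moreover have "inj_on (\<tau> \<circ> \<gamma>) (set cs)" using \<tau>(1) \<gamma> by (simp add: comp_inj_on)
    ultimately show "inj_on (\<lambda>j. \<tau> (\<gamma> (cs ! j))) {..<k}" using csj by (auto simp: inj_on_def)
    show "(\<lambda>j. \<tau> (\<gamma> (cs ! j))) ` {..<k} \<subseteq> {..<k}" using \<tau>(2) csj by blast
    show "G_mat k l m r A B w (cs ! j) = (if w = \<tau> (\<gamma> (cs ! j)) then 1 else 0)" if "j < k" for j w
      using G[OF csj[OF that]] IA csj[OF that] by simp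
  qed
  then show ?thesis by blast
qed

lemma nonvanishing_C_minor:
  fixes r :: "nat \<Rightarrow> nat"
  assumes R: "R = (\<Sum>i<m. r i)" and ms: "k + s = m * l" and l: "1 \<le> l" "l \<le> k" and i: "i < m"
  shows "nonvanishing_poly_fun (s * k + l * R)
    (\<lambda>x :: nat \<Rightarrow> 'a::field. det (mat l l (\<lambda>(t, t'). C_col k l (alpha_of s x) i t ((i * l + t') mod k))))"
proof -
  have mod: "(i * l + t') mod k < k" for t' using l by simp
  obtain x :: "nat \<Rightarrow> 'a" where x: "x \<in> affine_space (s * k + l * R)"
    and \<alpha>: "\<forall>w<k. \<forall>z<s. alpha_of s x w z = (if w = z mod k then 1 else 0)"
    using exists_point_with_coords[OF R, where \<alpha>="\<lambda>w z. if w = z mod k then 1 else 0"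
        and \<beta>="\<lambda>t i j. 0" and s=s and k=k and l=l]
    by blast
  have "det (mat l l (\<lambda>(t, t'). C_col k l (alpha_of s x) i t ((i * l + t') mod k))) =
      det (mat l l (\<lambda>(t, t'). C_col k l (\<lambda>w z. if w = z mod k then 1 else 0) i t ((i * l + t') mod k)))"
    using \<alpha> by (intro arg_cong[where f=det] mat_cong_square C_col_cong[OF _ ms i _ mod]) simp_all
  then have "det (mat l l (\<lambda>(t, t'). C_col k l (alpha_of s x) i t ((i * l + t') mod k))) \<noteq> 0"
    using C_minor_witness[OF l(2)] by simp
  moreover have "(\<lambda>x :: nat \<Rightarrow> 'a. det (mat l l (\<lambda>(t, t'). C_col k l (alpha_of s x) i t ((i * l + t') mod k))))
      \<in> poly_funs (s * k + l * R)"
    using poly_funs_C_col[OF ms i _ mod] by (intro poly_funs_det) auto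
  ultimately show ?thesis unfolding nonvanishing_poly_fun_def using x by blast
qed

lemma nonvanishing_N_minor:
  fixes r :: "nat \<Rightarrow> nat"
  assumes R: "R = (\<Sum>i<m. r i)" and i: "i < m" and cs: "cs \<in> col_selections l {..<l + r i}"
  shows "nonvanishing_poly_fun (s * k + l * R)
    (\<lambda>x :: nat \<Rightarrow> 'a::field. minor l (N_mat l (beta_of s k m r x) i) cs)"
proof -
  have csj: "cs ! j < l + r i" if "j < l" for j
    using cs that unfolding col_selections_def by (auto simp: subset_iff)
  obtain B :: "nat \<Rightarrow> nat \<Rightarrow> nat \<Rightarrow> 'a" where B: "minor l (N_mat l B i) cs \<noteq> 0"
    using N_minor_witness[OF cs] by blast
  obtain x :: "nat \<Rightarrow> 'a" where x: "x \<in> affine_space (s * k + l * R)"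
    and \<beta>: "\<forall>t<l. \<forall>i<m. \<forall>j<r i. beta_of s k m r x t i j = B t i j"
    using exists_point_with_coords[OF R, where \<alpha>="\<lambda>w z. 0" and \<beta>=B and s=s and k=k and l=l]
    by blast
  have "minor l (N_mat l (beta_of s k m r x) i) cs = minor l (N_mat l B i) cs"
    unfolding minor_def using \<beta> i csj
    by (intro arg_cong[where f=det] mat_cong_square N_mat_cong[where l=l and r=r]) simp_all
  moreover have "(\<lambda>x :: nat \<Rightarrow> 'a. minor l (N_mat l (beta_of s k m r x) i) cs) \<in> poly_funs (s * k + l * R)"
    unfolding minor_def using poly_funs_N_mat[OF R i _ csj] by (intro poly_funs_det) auto
  ultimately show ?thesis
    unfolding nonvanishing_poly_fun_def using x B by (intro conjI bexI[of _ x]) simp_all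
qed

lemma nonvanishing_G_minor:
  fixes r :: "nat \<Rightarrow> nat"
  assumes R: "R = (\<Sum>i<m. r i)" and ms: "k + s = m * l" and l: "1 \<le> l"
    and cs: "cs \<in> admissible_selections k l m r"
  shows "nonvanishing_poly_fun (s * k + l * R)
    (\<lambda>x :: nat \<Rightarrow> 'a::field. minor k (G_mat k l m r (alpha_of s x) (beta_of s k m r x)) cs)"
proof -
  have csj: "cs ! j < block_start l r m" if "j < k" for j
    using cs that unfolding admissible_selections_def col_selections_def by (auto simp: subset_iff)
  obtain A :: "nat \<Rightarrow> nat \<Rightarrow> 'a" and B where AB: "minor k (G_mat k l m r A B) cs \<noteq> 0"
    using G_minor_witness[OF cs l] by blast
  obtain x :: "nat \<Rightarrow> 'a" where x: "x \<in> affine_space (s * k + l * R)"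
    and \<alpha>: "\<forall>w<k. \<forall>z<s. alpha_of s x w z = A w z"
    and \<beta>: "\<forall>t<l. \<forall>i<m. \<forall>j<r i. beta_of s k m r x t i j = B t i j"
    using exists_point_with_coords[OF R, where \<alpha>=A and \<beta>=B and s=s and k=k and l=l]
    by blast
  have "minor k (G_mat k l m r (alpha_of s x) (beta_of s k m r x)) cs = minor k (G_mat k l m r A B) cs"
    unfolding minor_def using \<alpha> \<beta> csj
    by (intro arg_cong[where f=det] mat_cong_square G_mat_cong[OF _ ms]) simp_all
  moreover have "(\<lambda>x :: nat \<Rightarrow> 'a. minor k (G_mat k l m r (alpha_of s x) (beta_of s k m r x)) cs)
      \<in> poly_funs (s * k + l * R)"
    unfolding minor_def using poly_funs_G_mat[OF R ms _ csj] by (intro poly_funs_det) auto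
  ultimately show ?thesis
    unfolding nonvanishing_poly_fun_def using x AB by (intro conjI bexI[of _ x]) simp_all
qed

lemma finite_admissible_selections: "finite (admissible_selections k l m r)"
  unfolding admissible_selections_def using finite_col_selections[of "{..<block_start l r m}" k] by simp

definition pmds_minor_product :: "nat \<Rightarrow> nat \<Rightarrow> nat \<Rightarrow> nat \<Rightarrow> (nat \<Rightarrow> nat) \<Rightarrow> (nat \<Rightarrow> 'a::comm_ring_1) \<Rightarrow> 'a" where
  "pmds_minor_product s k l m r x =
     (\<Prod>i<m. det (mat l l (\<lambda>(t, t'). C_col k l (alpha_of s x) i t ((i * l + t') mod k)))) *
     (\<Prod>i<m. \<Prod>cs\<in>col_selections l {..<l + r i}. minor l (N_mat l (beta_of s k m r x) i) cs) *
     (\<Prod>cs\<in>admissible_selections k l m r. minor k (G_mat k l m r (alpha_of s x) (beta_of s k m r x)) cs)"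

lemma PMDS_code_if_pmds_minor_product_nonzero:
  fixes x :: "nat \<Rightarrow> 'a::field"
  assumes "1 \<le> l" "l \<le> k" "k < m * l" "n = block_start l r m"
    and "pmds_minor_product s k l m r x \<noteq> 0"
  shows "PMDS_code n k l m r (row_space k n (G_mat k l m r (alpha_of s x) (beta_of s k m r x)))"
  using assms(5) unfolding pmds_minor_product_def
  by (intro PMDS_code_if_minors_nonzero[OF assms(1-4)])
     (auto simp: finite_col_selections finite_admissible_selections)

lemma nonvanishing_pmds_minor_product:
  fixes r :: "nat \<Rightarrow> nat"
  assumes inf: "infinite (UNIV :: 'a::field set)"
    and R: "R = (\<Sum>i<m. r i)" and ms: "k + s = m * l" and l: "1 \<le> l" "l \<le> k"
  shows "nonvanishing_poly_fun (s * k + l * R) (pmds_minor_product s k l m r :: (nat \<Rightarrow> 'a) \<Rightarrow> 'a)"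
  unfolding pmds_minor_product_def
  using nonvanishing_C_minor[OF R ms l] nonvanishing_N_minor[OF R] nonvanishing_G_minor[OF R ms l(1)]
  by (intro nonvanishing_poly_fun_mult[OF inf] nonvanishing_poly_fun_prod[OF inf])
     (auto simp: finite_col_selections finite_admissible_selections)

theorem theorem17:
  fixes q s l m k n R :: nat and r :: "nat \<Rightarrow> nat"
  assumes "prime_power q"
    and "is_alg_closure_of_Fq q TYPE('a::field)"
    and "m \<ge> 2" and "s \<ge> 1" and "l \<ge> 1" and "\<forall>i<m. r i \<ge> 1"
    and "k = m * l - s" and "k \<ge> l"
    and "n = (\<Sum>i<m. l + r i)" and "R = (\<Sum>i<m. r i)"
  shows "generic_set (s * k + l * R)
     {x :: nat \<Rightarrow> 'a. x \<in> affine_space (s * k + l * R) \<and>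
        PMDS_code n k l m r
          (row_space k n (G_mat k l m r (alpha_of s x) (beta_of s k m r x)))}"
proof -
  have inf: "infinite (UNIV :: 'a set)"
    using assms(2) infinite_UNIV_if_alg_closed unfolding is_alg_closure_of_Fq_def by blast
  have ms: "k + s = m * l" and kml: "k < m * l" using assms(4,5,7,8) by linarith+
  have n: "n = block_start l r m" unfolding assms(9) block_start_def ..
  show ?thesis
    using nonvanishing_pmds_minor_product[OF inf assms(10) ms assms(5,8)]
      PMDS_code_if_pmds_minor_product_nonzero[OF assms(5,8) kml n]
    by (intro generic_set_if_nonvanishing_poly_fun) auto
qed

end
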